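(* Let $N\ge 1$ be an integer and let $a(1),a(2),\dots$ be a sequence of real numbers such that for all integers $n\ge N$, $$a(2n)\le a(n)+a(n)\quad\text{and}\quad a(2n+1)\le a(n)+a(n+1).$$ For $n\ge 1$ let $q(n):=\max\left\{\frac{a(j)}{j}: n\le j\le 2n\right\}$. Then $q(n)\ge q(n+1)$ for all $n\ge N$. *)

theory Defs
  imports Complex_Main
begin

definition qmax :: "(nat \<Rightarrow> real) \<Rightarrow> nat \<Rightarrow> real" where
  "qmax a n = Max {a j / real j | j. n \<le> j \<and> j \<le> 2 * n}"

end

theory Submission
  imports Defs
begin

text \<open>Passing from \<open>[n, 2n]\<close> to \<open>[n+1, 2n+2]\<close> only adds the indices \<open>2n+1\<close> and \<open>2n+2\<close>.
  By subadditivity, \<open>a(2n+1) \<le> a(n) + a(n+1)\<close> and \<open>a(2n+2) \<le> 2 a(n+1)\<close>, and since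
  \<open>a(n) \<le> n q(n)\<close> and \<open>a(n+1) \<le> (n+1) q(n)\<close>, both new ratios are at most \<open>q(n)\<close>.\<close>

lemma qmax_eq_Max_image: "qmax a n = Max ((\<lambda>j. a j / real j) ` {n..2*n})"
  unfolding qmax_def by (rule arg_cong[where f = Max]) auto

lemma qmax_ge: "n \<le> j \<Longrightarrow> j \<le> 2 * n \<Longrightarrow> a j / real j \<le> qmax a n"
  unfolding qmax_eq_Max_image by (rule Max_ge) auto

lemma qmax_leI:
  assumes "\<And>j. n \<le> j \<Longrightarrow> j \<le> 2 * n \<Longrightarrow> a j / real j \<le> Q"
  shows "qmax a n \<le> Q"
  unfolding qmax_eq_Max_image using assms by (subst Max_le_iff) auto

lemma mult_qmax_ge:
  assumes "n \<le> j" "j \<le> 2 * n" "j \<ge> 1"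
  shows "a j \<le> real j * qmax a n"
  using qmax_ge[OF assms(1,2), of a] assms(3) by (simp add: divide_le_eq mult.commute)

lemma qmax_Suc_le:
  assumes "n \<ge> 1"
    and odd: "a (2 * n + 1) \<le> a n + a (n + 1)"
    and even: "a (2 * n + 2) \<le> a (n + 1) + a (n + 1)"
  shows "qmax a (n + 1) \<le> qmax a n"
proof (rule qmax_leI)
  define Q where "Q = qmax a n"
  have an: "a n \<le> real n * Q"
    unfolding Q_def using assms(1) by (intro mult_qmax_ge) auto
  have an1: "a (n + 1) \<le> real (n + 1) * Q"
    unfolding Q_def using assms(1) by (intro mult_qmax_ge) auto
  fix j assume j: "n + 1 \<le> j" "j \<le> 2 * (n + 1)"
  then consider "j \<le> 2 * n" | "j = 2 * n + 1" | "j = 2 * n + 2" by (cases "j \<le> 2 * n"; cases "j = 2 * n + 1") auto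
  then show "a j / real j \<le> Q"
  proof cases
    case 1
    then show ?thesis unfolding Q_def using j by (intro qmax_ge) auto
  next
    case 2
    have "a j \<le> real j * Q" using odd an an1 2 by (simp add: algebra_simps)
    then show ?thesis using 2 by (simp add: divide_le_eq mult.commute)
  next
    case 3
    have "a j \<le> real j * Q" using even an1 3 by (simp add: algebra_simps)
    then show ?thesis using 3 by (simp add: divide_le_eq mult.commute)
  qed
qed

theorem lemma3p3:
  fixes a :: "nat \<Rightarrow> real" and N :: nat
  assumes "N \<ge> 1"
    and "\<And>n. n \<ge> N \<Longrightarrow> a (2 * n) \<le> a n + a n"
    and "\<And>n. n \<ge> N \<Longrightarrow> a (2 * n + 1) \<le> a n + a (n + 1)"
  shows "\<forall>n\<ge>N. qmax a n \<ge> qmax a (n + 1)"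
proof (intro allI impI)
  fix n assume n: "n \<ge> N"
  have "a (2 * n + 2) \<le> a (n + 1) + a (n + 1)"
    using assms(2)[of "n + 1"] n by (simp add: algebra_simps)
  then show "qmax a (n + 1) \<le> qmax a n"
    using n assms(1,3) by (intro qmax_Suc_le) auto
qed

end
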